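(* Let $H$ be a real separable Hilbert space, $(T_t)_{t\ge0}$ a strongly continuous semigroup on $H$, $(\mu_t)_{t\ge0}$ probability measures on $H$ with $\lim_{t\to0}\mu_t=\mu_0=\delta_0$ weakly and $\mu_{t+s}=(\mu_t\circ T_s^{-1})\ast\mu_s$ for $s,t\ge0$, and let $P_tf(x)=\int_Hf(T_tx+y)\,\mu_t(dy)$. Then: (i) for every $f\in Lip_b(H)$ the map $[0,\infty)\times H\ni(t,x)\mapsto P_tf(x)$ is continuous; moreover $P_t(Lip_b(H))\subset Lip_b(H)$ and $P_t(C_b(H))\subset C_b(H)$ for all $t>0$; (ii) $P_t(C_b^{\sigma w}(H))\subset C_b^{\sigma w}(H)$ for all $t>0$; (iii) if $T_t$ is compact, then $P_t(C_b(H))\subset C_b^{\sigma w}(H)$.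
   Context: $Lip_b(H)$: bounded Lipschitz functions; $C_b(H)$: bounded norm-continuous functions; $C_b^{\sigma w}(H)$: bounded functions that are sequentially continuous for the weak topology of $H$. *)

theory Defs
  imports "HOL-Probability.Probability"
begin

text \<open>Real separable Hilbert space: type class real_inner + complete_space + second_countable_topology.\<close>

definition meas_conv :: "'a::{real_normed_vector, second_countable_topology} measure \<Rightarrow> 'a measure \<Rightarrow> 'a measure" where
  "meas_conv M N = distr (M \<Otimes>\<^sub>M N) borel (\<lambda>(x, y). x + y)"

definition strongly_continuous_semigroup :: "(real \<Rightarrow> 'a::real_normed_vector \<Rightarrow> 'a) \<Rightarrow> bool" where
  "strongly_continuous_semigroup T \<longleftrightarrow>
     (\<forall>t\<ge>0. bounded_linear (T t)) \<and>
     T 0 = id \<and>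
     (\<forall>t\<ge>0. \<forall>s\<ge>0. T (t + s) = T t \<circ> T s) \<and>
     (\<forall>x. continuous_on {0..} (\<lambda>t. T t x))"

definition weak_conv_at_0 :: "(real \<Rightarrow> 'a::real_normed_vector measure) \<Rightarrow> 'a measure \<Rightarrow> bool" where
  "weak_conv_at_0 \<mu> \<nu> \<longleftrightarrow>
     (\<forall>f :: 'a \<Rightarrow> real. continuous_on UNIV f \<and> bounded (range f) \<longrightarrow>
        ((\<lambda>t. integral\<^sup>L (\<mu> t) f) \<longlongrightarrow> integral\<^sup>L \<nu> f) (at_right 0))"

definition Lip_b :: "('a::metric_space \<Rightarrow> real) set" where
  "Lip_b = {f. bounded (range f) \<and> (\<exists>L. L-lipschitz_on UNIV f)}"

definition C_b :: "('a::topological_space \<Rightarrow> real) set" where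
  "C_b = {f. bounded (range f) \<and> continuous_on UNIV f}"

definition weakly_convergent_to :: "(nat \<Rightarrow> 'a::real_inner) \<Rightarrow> 'a \<Rightarrow> bool" where
  "weakly_convergent_to xs x \<longleftrightarrow> (\<forall>h. (\<lambda>n. xs n \<bullet> h) \<longlonglongrightarrow> x \<bullet> h)"

definition C_b_sigma_w :: "('a::real_inner \<Rightarrow> real) set" where
  "C_b_sigma_w = {f. bounded (range f) \<and>
     (\<forall>xs x. weakly_convergent_to xs x \<longrightarrow> (\<lambda>n. f (xs n)) \<longlonglongrightarrow> f x)}"

definition compact_operator :: "('a::real_normed_vector \<Rightarrow> 'b::real_normed_vector) \<Rightarrow> bool" where
  "compact_operator A \<longleftrightarrow> bounded_linear A \<and> compact (closure (A ` ball 0 1))"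

definition transition_op ::
  "(real \<Rightarrow> 'a::real_normed_vector \<Rightarrow> 'a) \<Rightarrow> (real \<Rightarrow> 'a measure) \<Rightarrow> real \<Rightarrow> ('a \<Rightarrow> real) \<Rightarrow> 'a \<Rightarrow> real" where
  "transition_op T \<mu> t f x = (\<integral>y. f (T t x + y) \<partial>(\<mu> t))"

end

theory Submission
  imports Defs
begin

text \<open>
  \<open>P t f x\<close> depends on \<open>x\<close> only through \<open>T t x\<close>, so for fixed \<open>t > 0\<close> everything follows by
  bounded convergence from the matching continuity property of \<open>T t\<close>: norm continuity,
  weak sequential continuity (\<open>T t\<close> has an adjoint by the Riesz representation theorem) and,
  for compact \<open>T t\<close>, the passage from weakly to norm convergent sequences (weakly convergent
  sequences are bounded by the uniform boundedness principle).

  For joint continuity in \<open>(t, x)\<close>: \<open>T\<close> is jointly continuous on \<open>[0, \<infinity>) \<times> H\<close> (uniform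
  boundedness again), so it remains to show that \<open>t \<mapsto> \<integral> g d\<mu> t\<close> is continuous for
  \<open>g \<in> Lip_b\<close>. Near \<open>t\<^sub>0\<close> write \<open>\<mu> s = (\<mu> a \<circ> T (s - a)\<inverse>) * \<mu> (s - a)\<close> with \<open>a\<close> slightly
  below \<open>t\<^sub>0\<close>. Convolving with \<open>\<mu> (s - a)\<close> moves \<open>\<integral> g\<close> by at most
  \<open>\<integral> min (2 sup \<bar>g\<bar>) (L \<parallel>y\<parallel>) d\<mu> (s - a)\<close>, which is small because \<open>\<mu> r \<rightarrow> \<delta>\<^sub>0\<close>, while
  \<open>s \<mapsto> \<integral> g (T (s - a) w) d\<mu> a\<close> is continuous by dominated convergence.
\<close>

section \<open>Integrals of bounded functions\<close>

lemma borel_measurable_continuous_on_sets_borel: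
  assumes "sets M = sets borel" and "continuous_on UNIV f"
  shows "f \<in> borel_measurable M"
  using borel_measurable_continuous_onI[OF assms(2)] measurable_cong_sets[OF assms(1) refl] by blast

context prob_space
begin

lemma integrable_bounded:
  fixes f :: "'a \<Rightarrow> real"
  assumes "f \<in> borel_measurable M" and "\<And>x. \<bar>f x\<bar> \<le> B"
  shows "integrable M f"
  using assms by (intro integrable_const_bound[where B=B]) auto

lemma abs_integral_le_bound:
  fixes f :: "'a \<Rightarrow> real"
  assumes "f \<in> borel_measurable M" and "\<And>x. \<bar>f x\<bar> \<le> B"
  shows "\<bar>\<integral>x. f x \<partial>M\<bar> \<le> B"
proof -
  have "\<bar>\<integral>x. f x \<partial>M\<bar> \<le> (\<integral>x. \<bar>f x\<bar> \<partial>M)"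
    by (rule integral_abs_bound)
  also have "\<dots> \<le> B"
    using assms by (intro integral_le_const integrable_bounded[where B=B]) auto
  finally show ?thesis .
qed

lemma abs_integral_diff_le:
  fixes f g :: "'a \<Rightarrow> real"
  assumes "f \<in> borel_measurable M" "g \<in> borel_measurable M"
    and "\<And>x. \<bar>f x\<bar> \<le> B" "\<And>x. \<bar>g x\<bar> \<le> B"
    and "\<And>x. \<bar>f x - g x\<bar> \<le> c"
  shows "\<bar>(\<integral>x. f x \<partial>M) - (\<integral>x. g x \<partial>M)\<bar> \<le> c"
proof -
  have "integrable M f" "integrable M g"
    using assms by (auto intro: integrable_bounded)
  then have "(\<integral>x. f x \<partial>M) - (\<integral>x. g x \<partial>M) = (\<integral>x. f x - g x \<partial>M)"
    by simp
  also have "\<bar>\<dots>\<bar> \<le> c"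
    using assms by (intro abs_integral_le_bound) auto
  finally show ?thesis .
qed

lemma bounded_convergence:
  fixes s :: "nat \<Rightarrow> 'a \<Rightarrow> real" and f :: "'a \<Rightarrow> real"
  assumes "\<And>n. s n \<in> borel_measurable M" "f \<in> borel_measurable M"
    and "\<And>n x. \<bar>s n x\<bar> \<le> B" and "\<And>x. (\<lambda>n. s n x) \<longlonglongrightarrow> f x"
  shows "(\<lambda>n. \<integral>x. s n x \<partial>M) \<longlonglongrightarrow> (\<integral>x. f x \<partial>M)"
  using assms by (intro integral_dominated_convergence[where w="\<lambda>_. B"]) auto

end

lemma abs_integral_meas_conv_diff_le:
  fixes M N :: "'a::{real_normed_vector, second_countable_topology} measure"
    and g \<omega> :: "'a \<Rightarrow> real"
  assumes M: "prob_space M" "sets M = sets borel" and N: "prob_space N" "sets N = sets borel"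
    and g [measurable]: "g \<in> borel_measurable borel" and g_bound: "\<And>x. \<bar>g x\<bar> \<le> B"
    and \<omega> [measurable]: "\<omega> \<in> borel_measurable borel" and \<omega>_bound: "\<And>y. \<bar>\<omega> y\<bar> \<le> C"
    and modulus: "\<And>x y. \<bar>g (x + y) - g x\<bar> \<le> \<omega> y"
  shows "\<bar>(\<integral>x. g x \<partial>meas_conv M N) - (\<integral>x. g x \<partial>M)\<bar> \<le> (\<integral>y. \<omega> y \<partial>N)"
proof -
  interpret M: prob_space M by fact
  interpret N: prob_space N by fact
  interpret MN: pair_prob_space M N ..
  have add: "(\<lambda>(x, y). x + y) \<in> borel_measurable (M \<Otimes>\<^sub>M N)"
    using M N by measurable
  have sum_meas: "(\<lambda>p. g (fst p + snd p)) \<in> borel_measurable (M \<Otimes>\<^sub>M N)"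
    using M N by measurable
  have fst_meas: "(\<lambda>p. g (fst p)) \<in> borel_measurable (M \<Otimes>\<^sub>M N)"
    using M N by measurable
  have snd_meas: "(\<lambda>p. \<omega> (snd p)) \<in> borel_measurable (M \<Otimes>\<^sub>M N)"
    using M N by measurable
  have "(\<integral>x. g x \<partial>meas_conv M N) = (\<integral>p. g (fst p + snd p) \<partial>(M \<Otimes>\<^sub>M N))"
    unfolding meas_conv_def by (simp add: integral_distr[OF add] case_prod_beta)
  moreover have "(\<integral>x. g x \<partial>M) = (\<integral>p. g (fst p) \<partial>(M \<Otimes>\<^sub>M N))"
    using M by (subst N.distr_pair_fst[of M, symmetric]) (simp add: integral_distr)
  moreover have "(\<integral>y. \<omega> y \<partial>N) = (\<integral>p. \<omega> (snd p) \<partial>(M \<Otimes>\<^sub>M N))"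
    using MN.integral_fst'[OF MN.integrable_bounded[OF snd_meas \<omega>_bound]] by (simp add: M.prob_space)
  moreover have "\<bar>(\<integral>p. g (fst p + snd p) \<partial>(M \<Otimes>\<^sub>M N)) - (\<integral>p. g (fst p) \<partial>(M \<Otimes>\<^sub>M N))\<bar>
      \<le> (\<integral>p. \<omega> (snd p) \<partial>(M \<Otimes>\<^sub>M N))"
  proof -
    have sum_int: "integrable (M \<Otimes>\<^sub>M N) (\<lambda>p. g (fst p + snd p))"
      using sum_meas g_bound by (rule MN.integrable_bounded)
    have fst_int: "integrable (M \<Otimes>\<^sub>M N) (\<lambda>p. g (fst p))"
      using fst_meas g_bound by (rule MN.integrable_bounded)
    have snd_int: "integrable (M \<Otimes>\<^sub>M N) (\<lambda>p. \<omega> (snd p))"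
      using snd_meas \<omega>_bound by (rule MN.integrable_bounded)
    have "\<bar>(\<integral>p. g (fst p + snd p) \<partial>(M \<Otimes>\<^sub>M N)) - (\<integral>p. g (fst p) \<partial>(M \<Otimes>\<^sub>M N))\<bar>
        = \<bar>\<integral>p. g (fst p + snd p) - g (fst p) \<partial>(M \<Otimes>\<^sub>M N)\<bar>"
      using sum_int fst_int by simp
    also have "\<dots> \<le> (\<integral>p. \<bar>g (fst p + snd p) - g (fst p)\<bar> \<partial>(M \<Otimes>\<^sub>M N))"
      by (rule integral_abs_bound)
    also have "\<dots> \<le> (\<integral>p. \<omega> (snd p) \<partial>(M \<Otimes>\<^sub>M N))"
      using sum_int fst_int snd_int modulus by (intro integral_mono) auto
    finally show ?thesis .
  qed
  ultimately show ?thesis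
    by simp
qed

section \<open>Hilbert spaces\<close>

lemma orthogonal_if_norm_le_norm_add_scaleR:
  fixes v w :: "'a::real_inner"
  assumes "\<And>t. norm v \<le> norm (v + t *\<^sub>R w)"
  shows "v \<bullet> w = 0"
proof -
  \<comment> \<open>near the minimiser \<open>-(v \<bullet> w) / \<parallel>w\<parallel>\<^sup>2\<close>, damped so that \<open>w = 0\<close> needs no case split\<close>
  define c where "c = norm w ^ 2 + 1"
  define t where "t = - (v \<bullet> w) / c"
  have "c > 0"
    by (simp add: c_def add_nonneg_pos)
  then have tc: "t * c = - (v \<bullet> w)"
    by (simp add: t_def)
  have "norm v ^ 2 \<le> norm (v + t *\<^sub>R w) ^ 2"
    using assms by (simp add: power_mono)
  also have "\<dots> = norm v ^ 2 + 2 * t * (v \<bullet> w) + t ^ 2 * norm w ^ 2"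
    by (simp only: power2_norm_eq_inner) (simp add: inner_simps inner_commute algebra_simps power2_eq_square)
  finally have "0 \<le> (2 * t * (v \<bullet> w) + t ^ 2 * norm w ^ 2) * c ^ 2"
    by simp
  also have "\<dots> = 2 * (v \<bullet> w) * (t * c) * c + (t * c) ^ 2 * norm w ^ 2"
    by (simp add: algebra_simps power2_eq_square)
  also have "\<dots> = - ((v \<bullet> w) ^ 2 * (norm w ^ 2 + 2))"
    unfolding tc by (simp add: c_def algebra_simps power2_eq_square)
  finally have "(v \<bullet> w) ^ 2 * (norm w ^ 2 + 2) \<le> 0"
    by simp
  moreover have "norm w ^ 2 + 2 > 0"
    by (simp add: add_nonneg_pos)
  ultimately show ?thesis
    by (simp add: mult_le_0_iff)
qed

lemma closed_convex_has_min_norm_element: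
  fixes C :: "'a::{real_inner, complete_space} set"
  assumes "closed C" and "convex C" and "C \<noteq> {}"
  obtains v where "v \<in> C" and "\<And>x. x \<in> C \<Longrightarrow> norm v \<le> norm x"
proof -
  define d where "d = Inf ((\<lambda>x. norm x ^ 2) ` C)"
  have d_le: "d \<le> norm x ^ 2" if "x \<in> C" for x
    unfolding d_def using that by (intro cInf_lower bdd_belowI[of _ 0]) auto
  have "\<exists>x\<in>C. norm x ^ 2 < d + 1 / Suc n" for n
    using cInf_lessD[of "(\<lambda>x. norm x ^ 2) ` C" "d + 1 / Suc n"] \<open>C \<noteq> {}\<close>
    by (auto simp: d_def)
  then obtain x where x_in: "\<And>n. x n \<in> C" and x_small: "\<And>n. norm (x n) ^ 2 < d + 1 / Suc n"
    by metis
  have dist_x: "dist (x m) (x n) ^ 2 < 2 / Suc m + 2 / Suc n" for m n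
  proof -
    have "(1/2) *\<^sub>R x m + (1/2) *\<^sub>R x n \<in> C"
      using \<open>convex C\<close> x_in by (intro convexD) auto
    then have "d \<le> norm ((1/2) *\<^sub>R (x m + x n)) ^ 2"
      using d_le by (simp only: scaleR_add_right)
    then have "4 * d \<le> norm (x m + x n) ^ 2"
      by (simp add: power_divide)
    moreover have "dist (x m) (x n) ^ 2 = 2 * norm (x m) ^ 2 + 2 * norm (x n) ^ 2 - norm (x m + x n) ^ 2"
      by (simp add: dist_norm power2_norm_eq_inner inner_simps inner_commute)
    ultimately show ?thesis
      using x_small[of m] x_small[of n] by linarith
  qed
  have "Cauchy x"
  proof (rule metric_CauchyI)
    fix e :: real
    assume "e > 0"
    then obtain N :: nat where "4 / e ^ 2 < N"
      using reals_Archimedean2 by blast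
    then have N: "4 / Suc N < e ^ 2"
      using \<open>e > 0\<close> by (simp add: field_simps) (smt (verit) zero_less_power)
    have "dist (x m) (x n) < e" if "N \<le> m" "N \<le> n" for m n
    proof -
      have "2 / Suc m \<le> 2 / Suc N" "2 / Suc n \<le> 2 / Suc N"
        using that by (simp_all add: frac_le)
      then have "dist (x m) (x n) ^ 2 < e ^ 2"
        using dist_x[of m n] N by linarith
      then show ?thesis
        using \<open>e > 0\<close> by (simp add: power_less_imp_less_base)
    qed
    then show "\<exists>N. \<forall>m\<ge>N. \<forall>n\<ge>N. dist (x m) (x n) < e"
      by blast
  qed
  then obtain v where lim: "x \<longlonglongrightarrow> v"
    using convergent_eq_Cauchy convergent_def by blast
  have "v \<in> C"
    using closed_sequentially[OF \<open>closed C\<close> x_in lim] .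
  moreover have "norm v ^ 2 \<le> d"
  proof (rule LIMSEQ_le)
    show "(\<lambda>n. norm (x n) ^ 2) \<longlonglongrightarrow> norm v ^ 2"
      by (intro tendsto_intros lim)
    show "(\<lambda>n. d + 1 / Suc n) \<longlonglongrightarrow> d"
      using tendsto_add[OF tendsto_const LIMSEQ_Suc[OF lim_inverse_n']] by (simp add: divide_inverse)
  qed (use x_small less_imp_le in blast)
  ultimately show ?thesis
    using that d_le by (metis order_trans power2_le_imp_le norm_ge_zero)
qed

lemma riesz_representation:
  fixes \<phi> :: "'a::{real_inner, complete_space} \<Rightarrow> real"
  assumes "bounded_linear \<phi>"
  obtains g where "\<And>x. \<phi> x = x \<bullet> g"
proof (cases "\<forall>x. \<phi> x = 0")
  case True
  then show ?thesis
    using that[of 0] by simp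
next
  case False
  interpret \<phi>: bounded_linear \<phi> by fact
  obtain u where "\<phi> u \<noteq> 0"
    using False by blast
  \<comment> \<open>the point of least norm on the hyperplane \<open>\<phi> = 1\<close> is orthogonal to the kernel of \<open>\<phi>\<close>\<close>
  define C where "C = {x. \<phi> x = 1}"
  have "closed C"
    unfolding C_def by (intro closed_Collect_eq continuous_intros \<phi>.continuous_on)
  moreover have "convex C"
    by (auto simp: C_def convex_def \<phi>.add \<phi>.scale)
  moreover have "(1 / \<phi> u) *\<^sub>R u \<in> C"
    using \<open>\<phi> u \<noteq> 0\<close> by (simp add: C_def \<phi>.scale)
  ultimately obtain v where v: "v \<in> C" and v_min: "\<And>x. x \<in> C \<Longrightarrow> norm v \<le> norm x"
    using closed_convex_has_min_norm_element by blast
  have orth: "v \<bullet> w = 0" if "\<phi> w = 0" for w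
    using v that by (intro orthogonal_if_norm_le_norm_add_scaleR v_min) (simp add: C_def \<phi>.add \<phi>.scale)
  have "\<phi> x = x \<bullet> ((1 / (v \<bullet> v)) *\<^sub>R v)" for x
  proof -
    have "v \<bullet> (x - \<phi> x *\<^sub>R v) = 0"
      using v by (intro orth) (simp add: C_def \<phi>.diff \<phi>.scale)
    moreover have "v \<bullet> v \<noteq> 0"
      using v by (auto simp: C_def \<phi>.zero)
    ultimately show ?thesis
      by (simp add: inner_simps inner_commute field_simps)
  qed
  then show ?thesis
    using that by blast
qed

lemma uniform_boundedness:
  fixes A :: "'i \<Rightarrow> 'a::{real_normed_vector, complete_space} \<Rightarrow> 'b::real_normed_vector"
  assumes linear: "\<And>i. i \<in> I \<Longrightarrow> bounded_linear (A i)"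
    and pointwise: "\<And>x. \<exists>B. \<forall>i\<in>I. norm (A i x) \<le> B"
  obtains K where "\<And>i x. i \<in> I \<Longrightarrow> norm (A i x) \<le> K * norm x"
proof -
  define F where "F n = {x. \<forall>i\<in>I. norm (A i x) \<le> real n}" for n :: nat
  have closed: "closed (F n)" for n
  proof -
    have "closed {x. norm (A i x) \<le> real n}" if "i \<in> I" for i
      using linear[OF that] by (intro closed_Collect_le continuous_intros linear_continuous_on)
    moreover have "F n = (\<Inter>i\<in>I. {x. norm (A i x) \<le> real n})"
      by (auto simp: F_def)
    ultimately show ?thesis
      by (auto intro: closed_INT)
  qed
  have cover: "\<Union>(range F) = UNIV"
  proof -
    have "x \<in> \<Union>(range F)" for x
    proof -
      obtain B where "\<forall>i\<in>I. norm (A i x) \<le> B"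
        using pointwise by blast
      then have "x \<in> F (nat \<lceil>B\<rceil>)"
        by (force simp: F_def intro: order_trans[OF _ real_nat_ceiling_ge])
      then show ?thesis
        by blast
    qed
    then show ?thesis
      by blast
  qed
  have "\<exists>T\<in>range F. \<not> (closedin euclidean T \<and> euclidean interior_of T = {})"
  proof (rule ccontr)
    assume "\<not> ?thesis"
    then have "euclidean interior_of \<Union>(range F) = {}"
      by (intro Baire_category_alt) (auto simp: completely_metrizable_space_euclidean)
    with cover show False
      by simp
  qed
  then obtain n where "interior (F n) \<noteq> {}"
    using closed by auto
  then obtain x0 r where "r > 0" and ball: "ball x0 r \<subseteq> F n"
    by (metis ex_in_conv mem_interior)
  have "norm (A i x) \<le> (4 * n / r) * norm x" if "i \<in> I" for i x
  proof (cases "x = 0")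
    case True
    then show ?thesis
      using linear[OF that] by (simp add: linear_simps)
  next
    case False
    interpret A: bounded_linear "A i"
      using linear[OF that] .
    define c where "c = r / (2 * norm x)"
    have "c > 0"
      using \<open>r > 0\<close> False by (simp add: c_def)
    have "x0 \<in> F n" "x0 + c *\<^sub>R x \<in> F n"
      using \<open>r > 0\<close> \<open>c > 0\<close> False by (auto intro!: subsetD[OF ball] simp: dist_norm c_def)
    then have "norm (A i x0) \<le> n" "norm (A i (x0 + c *\<^sub>R x)) \<le> n"
      using that by (auto simp: F_def)
    then have "c * norm (A i x) \<le> 2 * n"
      using norm_triangle_ineq4[of "A i (x0 + c *\<^sub>R x)" "A i x0"] \<open>c > 0\<close>
      by (simp add: A.add A.scale)
    then show ?thesis
      using \<open>c > 0\<close> \<open>r > 0\<close> False by (simp add: c_def field_simps)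
  qed
  then show ?thesis
    using that by blast
qed

lemma weakly_convergent_to_bounded_linear:
  fixes A :: "'a::{real_inner, complete_space} \<Rightarrow> 'b::real_inner"
  assumes "bounded_linear A" and "weakly_convergent_to xs x"
  shows "weakly_convergent_to (\<lambda>n. A (xs n)) (A x)"
  unfolding weakly_convergent_to_def
proof
  fix h
  obtain g where "\<And>y. A y \<bullet> h = y \<bullet> g"
    using riesz_representation[OF bounded_linear_compose[OF bounded_linear_inner_left assms(1)]]
    by metis
  then show "(\<lambda>n. A (xs n) \<bullet> h) \<longlonglongrightarrow> A x \<bullet> h"
    using assms(2) by (simp add: weakly_convergent_to_def)
qed

lemma weakly_convergent_to_add_const:
  assumes "weakly_convergent_to xs x"
  shows "weakly_convergent_to (\<lambda>n. xs n + y) (x + y)"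
  using assms unfolding weakly_convergent_to_def inner_add_left by (auto intro: tendsto_add)

lemma LIMSEQ_imp_weakly_convergent_to:
  assumes "xs \<longlonglongrightarrow> x"
  shows "weakly_convergent_to xs x"
  unfolding weakly_convergent_to_def using tendsto_inner[OF assms tendsto_const] by blast

lemma weakly_convergent_to_subseq:
  assumes "weakly_convergent_to xs x" and "strict_mono r"
  shows "weakly_convergent_to (\<lambda>n. xs (r n)) x"
  using assms LIMSEQ_subseq_LIMSEQ[of _ _ r] unfolding weakly_convergent_to_def o_def by blast

lemma weakly_convergent_to_LIMSEQ_unique:
  assumes "weakly_convergent_to xs x" and "xs \<longlonglongrightarrow> y"
  shows "x = y"
proof -
  have "(\<lambda>n. xs n \<bullet> (x - y)) \<longlonglongrightarrow> x \<bullet> (x - y)"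
    using assms(1) by (simp add: weakly_convergent_to_def)
  moreover have "(\<lambda>n. xs n \<bullet> (x - y)) \<longlonglongrightarrow> y \<bullet> (x - y)"
    using tendsto_inner[OF assms(2) tendsto_const] .
  ultimately have "(x - y) \<bullet> (x - y) = 0"
    using LIMSEQ_unique by (fastforce simp: inner_diff_left)
  then show ?thesis
    by simp
qed

lemma weakly_convergent_to_bounded:
  fixes xs :: "nat \<Rightarrow> 'a::{real_inner, complete_space}"
  assumes "weakly_convergent_to xs x"
  shows "bounded (range xs)"
proof -
  have "Bseq (\<lambda>n. xs n \<bullet> y)" for y
    using assms by (auto simp: weakly_convergent_to_def intro: convergent_imp_Bseq convergentI)
  then have pointwise: "\<exists>B. \<forall>n\<in>UNIV. norm (xs n \<bullet> y) \<le> B" for y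
    by (auto simp: Bseq_def)
  obtain K where K: "\<And>n y. n \<in> UNIV \<Longrightarrow> norm (xs n \<bullet> y) \<le> K * norm y"
    by (rule uniform_boundedness[of UNIV "\<lambda>n y. xs n \<bullet> y"]) (use bounded_linear_inner_right pointwise in auto)
  have "norm (xs n) \<le> max K 0" for n
  proof (cases "xs n = 0")
    case False
    have "norm (xs n) * norm (xs n) \<le> K * norm (xs n)"
      using K[of n "xs n"] by (simp add: power2_eq_square[symmetric] power2_norm_eq_inner)
    then show ?thesis
      using False by simp
  qed simp
  then show ?thesis
    by (auto simp: bounded_iff)
qed

lemma LIMSEQ_if_subseqs_LIMSEQ:
  fixes X :: "nat \<Rightarrow> 'a::metric_space"
  assumes "\<And>r :: nat \<Rightarrow> nat. strict_mono r \<Longrightarrow>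
    \<exists>s :: nat \<Rightarrow> nat. strict_mono s \<and> (\<lambda>n. X (r (s n))) \<longlonglongrightarrow> L"
  shows "X \<longlonglongrightarrow> L"
proof (rule ccontr)
  assume "\<not> X \<longlonglongrightarrow> L"
  then obtain e where "e > 0" and "\<forall>N. \<exists>n\<ge>N. e \<le> dist (X n) L"
    unfolding LIMSEQ_def by (auto simp: not_less)
  then have "infinite {n. e \<le> dist (X n) L}"
    unfolding infinite_nat_iff_unbounded_le by blast
  from infinite_enumerate[OF this] obtain r :: "nat \<Rightarrow> nat"
    where r: "strict_mono r" and "\<forall>n. r n \<in> {n. e \<le> dist (X n) L}"
    by blast
  then have far: "\<And>n. e \<le> dist (X (r n)) L"
    by simp
  obtain s where "(\<lambda>n. X (r (s n))) \<longlonglongrightarrow> L"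
    using assms[OF r] by blast
  then obtain N where "\<forall>n\<ge>N. dist (X (r (s n))) L < e"
    using metric_LIMSEQ_D \<open>e > 0\<close> by blast
  then have "dist (X (r (s N))) L < e"
    by simp
  with far[of "s N"] show False
    by simp
qed

lemma compact_operator_bounded_seq_convergent_subseq:
  fixes A :: "'a::real_normed_vector \<Rightarrow> 'b::real_normed_vector" and xs :: "nat \<Rightarrow> 'a"
  assumes "compact_operator A" and "bounded (range xs)"
  obtains s l where "strict_mono s" and "(\<lambda>n. A (xs (s n))) \<longlonglongrightarrow> l"
proof -
  interpret A: bounded_linear A
    using assms(1) by (simp add: compact_operator_def)
  obtain c where "c > 0" and c: "\<And>n. norm (xs n) < c"
    using assms(2) unfolding bounded_pos_less by auto
  have "seq_compact (closure (A ` ball 0 1))"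
    using assms(1) by (simp add: compact_operator_def compact_imp_seq_compact)
  moreover have "(1 / c) *\<^sub>R xs n \<in> ball 0 1" for n
    using c[of n] \<open>c > 0\<close> by (simp add: field_simps)
  then have "\<forall>n. A ((1 / c) *\<^sub>R xs n) \<in> closure (A ` ball 0 1)"
    using closure_subset by blast
  ultimately obtain l s where "l \<in> closure (A ` ball 0 1)" and s: "strict_mono s"
    and lim: "((\<lambda>n. A ((1 / c) *\<^sub>R xs n)) \<circ> s) \<longlonglongrightarrow> l"
    by (rule seq_compactE)
  have "(\<lambda>n. A (xs (s n))) \<longlonglongrightarrow> c *\<^sub>R l"
    using tendsto_scaleR[OF tendsto_const[of c] lim] \<open>c > 0\<close> by (simp add: A.scale o_def)
  with s show ?thesis
    using that by blast
qed

lemma compact_operator_weakly_convergent_to_imp_LIMSEQ: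
  fixes A :: "'a::{real_inner, complete_space} \<Rightarrow> 'b::real_inner"
  assumes "compact_operator A" and "weakly_convergent_to xs x"
  shows "(\<lambda>n. A (xs n)) \<longlonglongrightarrow> A x"
proof (rule LIMSEQ_if_subseqs_LIMSEQ)
  fix r :: "nat \<Rightarrow> nat"
  assume "strict_mono r"
  then have weak: "weakly_convergent_to (\<lambda>n. xs (r n)) x"
    by (rule weakly_convergent_to_subseq[OF assms(2)])
  obtain s l where s: "strict_mono s" and lim: "(\<lambda>n. A (xs (r (s n)))) \<longlonglongrightarrow> l"
    by (rule compact_operator_bounded_seq_convergent_subseq[OF assms(1) weakly_convergent_to_bounded[OF weak]])
  have "bounded_linear A"
    using assms(1) by (simp add: compact_operator_def)
  then have "weakly_convergent_to (\<lambda>n. A (xs (r (s n)))) (A x)"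
    using weakly_convergent_to_subseq[OF weak s] by (rule weakly_convergent_to_bounded_linear)
  then have "A x = l"
    using lim by (rule weakly_convergent_to_LIMSEQ_unique)
  then show "\<exists>s. strict_mono s \<and> (\<lambda>n. A (xs (r (s n)))) \<longlonglongrightarrow> A x"
    using s lim by blast
qed

section \<open>Transition operators at a fixed time\<close>

lemma Lip_bE:
  assumes "f \<in> Lip_b"
  obtains B L where "\<And>x. \<bar>f x\<bar> \<le> B" and "L-lipschitz_on UNIV f"
  using assms unfolding Lip_b_def bounded_iff by auto

lemma Lip_b_translate:
  fixes c :: "'a::real_normed_vector"
  assumes "f \<in> Lip_b"
  shows "(\<lambda>y. f (c + y)) \<in> Lip_b"
proof -
  obtain B L where "\<And>x. \<bar>f x\<bar> \<le> B" and lip: "L-lipschitz_on UNIV f"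
    using Lip_bE[OF assms] by blast
  moreover have "L-lipschitz_on UNIV (\<lambda>y. f (c + y))"
  proof (rule lipschitz_onI)
    fix x y :: 'a
    show "dist (f (c + x)) (f (c + y)) \<le> L * dist x y"
      using lipschitz_onD[OF lip, of "c + x" "c + y"] by (simp add: dist_norm)
  qed (rule lipschitz_on_nonneg[OF lip])
  ultimately show ?thesis
    unfolding Lip_b_def bounded_iff by auto
qed

lemma C_bE:
  assumes "f \<in> C_b"
  obtains B where "\<And>x. \<bar>f x\<bar> \<le> B" and "continuous_on UNIV f"
  using assms unfolding C_b_def bounded_iff by auto

lemma C_b_sigma_wE:
  assumes "f \<in> C_b_sigma_w"
  obtains B where "\<And>x. \<bar>f x\<bar> \<le> B"
    and "\<And>xs x. weakly_convergent_to xs x \<Longrightarrow> (\<lambda>n. f (xs n)) \<longlonglongrightarrow> f x"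
  using assms unfolding C_b_sigma_w_def bounded_iff by auto

lemma C_b_sigma_w_subset_C_b: "C_b_sigma_w \<subseteq> C_b"
proof
  fix f :: "'a \<Rightarrow> real"
  assume "f \<in> C_b_sigma_w"
  then have "continuous_on UNIV f"
    unfolding C_b_sigma_w_def
    by (auto intro!: continuous_on_sequentiallyI LIMSEQ_imp_weakly_convergent_to)
  then show "f \<in> C_b"
    using \<open>f \<in> C_b_sigma_w\<close> by (simp add: C_b_def C_b_sigma_w_def)
qed

context
  fixes T :: "real \<Rightarrow> 'a::{real_normed_vector, second_countable_topology} \<Rightarrow> 'a"
    and \<mu> :: "real \<Rightarrow> 'a measure" and t :: real
  assumes prob: "prob_space (\<mu> t)" and sets_\<mu>: "sets (\<mu> t) = sets borel"
begin

interpretation \<mu>: prob_space "\<mu> t"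
  by (fact prob)

declare sets_\<mu>[measurable_cong]

lemma transition_op_abs_le:
  assumes [measurable]: "f \<in> borel_measurable borel" and "\<And>x. \<bar>f x\<bar> \<le> B"
  shows "\<bar>transition_op T \<mu> t f x\<bar> \<le> B"
  unfolding transition_op_def using assms(2) by (intro \<mu>.abs_integral_le_bound) measurable

lemma bounded_range_transition_op:
  assumes "f \<in> borel_measurable borel" and "\<And>x. \<bar>f x\<bar> \<le> B"
  shows "bounded (range (transition_op T \<mu> t f))"
  using transition_op_abs_le[OF assms] by (auto simp: bounded_iff)

lemma transition_op_LIMSEQ:
  assumes [measurable]: "f \<in> borel_measurable borel" and "\<And>x. \<bar>f x\<bar> \<le> B"
    and "\<And>y. (\<lambda>n. f (T t (xs n) + y)) \<longlonglongrightarrow> f (T t x + y)"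
  shows "(\<lambda>n. transition_op T \<mu> t f (xs n)) \<longlonglongrightarrow> transition_op T \<mu> t f x"
  unfolding transition_op_def using assms(2,3) by (intro \<mu>.bounded_convergence) measurable

lemma transition_op_abs_diff_le:
  assumes "\<And>x. \<bar>f x\<bar> \<le> B" and lip: "L-lipschitz_on UNIV f"
  shows "\<bar>transition_op T \<mu> t f x - (\<integral>y. f (c + y) \<partial>\<mu> t)\<bar> \<le> L * norm (T t x - c)"
proof -
  have [measurable]: "f \<in> borel_measurable borel"
    using lip by (intro borel_measurable_continuous_onI lipschitz_on_continuous_on)
  have "\<bar>f (T t x + y) - f (c + y)\<bar> \<le> L * norm (T t x - c)" for y
    using lipschitz_onD[OF lip, of "T t x + y" "c + y"] by (simp add: dist_real_def dist_norm)
  then show ?thesis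
    unfolding transition_op_def using assms(1) by (intro \<mu>.abs_integral_diff_le) measurable
qed

lemma transition_op_Lip_b:
  assumes "bounded_linear (T t)" and "f \<in> Lip_b"
  shows "transition_op T \<mu> t f \<in> Lip_b"
proof -
  interpret T: bounded_linear "T t" by fact
  obtain B L where bound: "\<And>x. \<bar>f x\<bar> \<le> B" and lip: "L-lipschitz_on UNIV f"
    using Lip_bE[OF assms(2)] by blast
  have "(L * onorm (T t))-lipschitz_on UNIV (transition_op T \<mu> t f)"
  proof (rule lipschitz_onI)
    fix x x' :: 'a
    have "\<bar>transition_op T \<mu> t f x - transition_op T \<mu> t f x'\<bar> \<le> L * norm (T t x - T t x')"
      using transition_op_abs_diff_le[OF bound lip, of x "T t x'"] by (simp add: transition_op_def)
    also have "\<dots> \<le> L * (onorm (T t) * norm (x - x'))"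
      using onorm[OF assms(1), of "x - x'"] lipschitz_on_nonneg[OF lip] by (simp add: T.diff mult_left_mono)
    finally show "dist (transition_op T \<mu> t f x) (transition_op T \<mu> t f x') \<le> L * onorm (T t) * dist x x'"
      by (simp add: dist_real_def dist_norm mult.assoc)
  qed (use lipschitz_on_nonneg[OF lip] onorm_pos_le[OF assms(1)] in simp)
  moreover have "bounded (range (transition_op T \<mu> t f))"
    using bound lip by (intro bounded_range_transition_op borel_measurable_continuous_onI lipschitz_on_continuous_on)
  ultimately show ?thesis
    unfolding Lip_b_def by blast
qed

lemma transition_op_C_b:
  assumes "continuous_on UNIV (T t)" and "f \<in> C_b"
  shows "transition_op T \<mu> t f \<in> C_b"
proof -
  obtain B where bound: "\<And>x. \<bar>f x\<bar> \<le> B" and cont: "continuous_on UNIV f"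
    using C_bE[OF assms(2)] by blast
  have meas: "f \<in> borel_measurable borel"
    using cont by (rule borel_measurable_continuous_onI)
  have "continuous_on UNIV (transition_op T \<mu> t f)"
  proof (rule continuous_on_sequentiallyI)
    fix xs :: "nat \<Rightarrow> 'a" and x
    assume "xs \<longlonglongrightarrow> x"
    then have "(\<lambda>n. T t (xs n)) \<longlonglongrightarrow> T t x"
      by (rule continuous_on_tendsto_compose[OF assms(1)]) auto
    then have "(\<lambda>n. f (T t (xs n) + y)) \<longlonglongrightarrow> f (T t x + y)" for y
      using continuous_on_tendsto_compose[OF cont tendsto_add[OF _ tendsto_const]] by simp
    then show "(\<lambda>n. transition_op T \<mu> t f (xs n)) \<longlonglongrightarrow> transition_op T \<mu> t f x"
      by (rule transition_op_LIMSEQ[OF meas bound])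
  qed
  then show ?thesis
    using bounded_range_transition_op[OF meas bound] by (simp add: C_b_def)
qed

end

context
  fixes T :: "real \<Rightarrow> 'a::{real_inner, complete_space, second_countable_topology} \<Rightarrow> 'a"
    and \<mu> :: "real \<Rightarrow> 'a measure" and t :: real
  assumes prob: "prob_space (\<mu> t)" and sets_\<mu>: "sets (\<mu> t) = sets borel"
begin

lemma transition_op_C_b_sigma_w:
  assumes "bounded_linear (T t)" and "f \<in> C_b_sigma_w"
  shows "transition_op T \<mu> t f \<in> C_b_sigma_w"
proof -
  obtain B where bound: "\<And>x. \<bar>f x\<bar> \<le> B"
    and weak_cont: "\<And>xs x. weakly_convergent_to xs x \<Longrightarrow> (\<lambda>n. f (xs n)) \<longlonglongrightarrow> f x"
    using C_b_sigma_wE[OF assms(2)] by blast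
  have meas: "f \<in> borel_measurable borel"
    using assms(2) C_b_sigma_w_subset_C_b by (auto simp: C_b_def intro: borel_measurable_continuous_onI)
  have "(\<lambda>n. transition_op T \<mu> t f (xs n)) \<longlonglongrightarrow> transition_op T \<mu> t f x"
    if "weakly_convergent_to xs x" for xs x
  proof (rule transition_op_LIMSEQ[where T=T and \<mu>=\<mu>, OF prob sets_\<mu> meas bound])
    fix y
    show "(\<lambda>n. f (T t (xs n) + y)) \<longlonglongrightarrow> f (T t x + y)"
      using weakly_convergent_to_add_const[OF weakly_convergent_to_bounded_linear[OF assms(1) that]]
      by (rule weak_cont)
  qed
  then show ?thesis
    using bounded_range_transition_op[where T=T and \<mu>=\<mu>, OF prob sets_\<mu> meas bound] by (simp add: C_b_sigma_w_def)
qed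

lemma transition_op_compact_C_b_sigma_w:
  assumes "compact_operator (T t)" and "f \<in> C_b"
  shows "transition_op T \<mu> t f \<in> C_b_sigma_w"
proof -
  obtain B where bound: "\<And>x. \<bar>f x\<bar> \<le> B" and cont: "continuous_on UNIV f"
    using C_bE[OF assms(2)] by blast
  have meas: "f \<in> borel_measurable borel"
    using cont by (rule borel_measurable_continuous_onI)
  have "(\<lambda>n. transition_op T \<mu> t f (xs n)) \<longlonglongrightarrow> transition_op T \<mu> t f x"
    if "weakly_convergent_to xs x" for xs x
  proof (rule transition_op_LIMSEQ[where T=T and \<mu>=\<mu>, OF prob sets_\<mu> meas bound])
    fix y
    have "(\<lambda>n. T t (xs n) + y) \<longlonglongrightarrow> T t x + y"
      using compact_operator_weakly_convergent_to_imp_LIMSEQ[OF assms(1) that] by (rule tendsto_add) simp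
    then show "(\<lambda>n. f (T t (xs n) + y)) \<longlonglongrightarrow> f (T t x + y)"
      by (rule continuous_on_tendsto_compose[OF cont]) auto
  qed
  then show ?thesis
    using bounded_range_transition_op[where T=T and \<mu>=\<mu>, OF prob sets_\<mu> meas bound] by (simp add: C_b_sigma_w_def)
qed

end

section \<open>Joint continuity in time and space\<close>

lemma strongly_continuous_semigroupD:
  assumes "strongly_continuous_semigroup T"
  shows strongly_continuous_semigroup_bounded_linear: "t \<ge> 0 \<Longrightarrow> bounded_linear (T t)"
    and strongly_continuous_semigroup_orbit: "continuous_on {0..} (\<lambda>t. T t x)"
  using assms by (auto simp: strongly_continuous_semigroup_def)

lemma strongly_continuous_semigroup_locally_bounded:
  fixes T :: "real \<Rightarrow> 'a::{real_normed_vector, complete_space} \<Rightarrow> 'a"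
  assumes "strongly_continuous_semigroup T"
  obtains K where "\<And>t x. t \<in> {0..R} \<Longrightarrow> norm (T t x) \<le> K * norm x"
proof (rule uniform_boundedness[of "{0..R}" T])
  show "bounded_linear (T t)" if "t \<in> {0..R}" for t
    using that by (auto intro: strongly_continuous_semigroup_bounded_linear[OF assms])
  show "\<exists>B. \<forall>t\<in>{0..R}. norm (T t x) \<le> B" for x
  proof -
    have "compact ((\<lambda>t. T t x) ` {0..R})"
      by (intro compact_continuous_image continuous_on_subset[OF strongly_continuous_semigroup_orbit[OF assms]])
        auto
    then show ?thesis
      by (auto dest!: compact_imp_bounded simp: bounded_iff)
  qed
qed (rule that)

lemma strongly_continuous_semigroup_continuous_on:
  fixes T :: "real \<Rightarrow> 'a::{real_normed_vector, complete_space} \<Rightarrow> 'a"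
  assumes sg: "strongly_continuous_semigroup T"
  shows "continuous_on ({0..} \<times> UNIV) (\<lambda>(t, x). T t x)"
  unfolding continuous_on_def
proof
  fix p :: "real \<times> 'a"
  assume "p \<in> {0..} \<times> UNIV"
  then obtain t0 x0 where p: "p = (t0, x0)" and "t0 \<ge> 0"
    by auto
  let ?F = "at p within {0..} \<times> UNIV"
  obtain K where K: "\<And>t x. t \<in> {0..t0 + 1} \<Longrightarrow> norm (T t x) \<le> K * norm x"
    using strongly_continuous_semigroup_locally_bounded[OF sg] by blast
  have fst_lim: "((\<lambda>q. fst q) \<longlongrightarrow> t0) ?F" and snd_lim: "((\<lambda>q. snd q) \<longlongrightarrow> x0) ?F"
    using tendsto_fst[OF tendsto_ident_at] tendsto_snd[OF tendsto_ident_at] p by auto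
  have "continuous_on ({0..} \<times> UNIV) (\<lambda>q. T (fst q) x0)"
    by (intro continuous_on_compose2[OF strongly_continuous_semigroup_orbit[OF sg]] continuous_on_fst
        continuous_on_id) auto
  then have orbit_lim: "((\<lambda>q. T (fst q) x0) \<longlongrightarrow> T t0 x0) ?F"
    using \<open>p \<in> {0..} \<times> UNIV\<close> p by (auto simp: continuous_on_def)
  have "((\<lambda>q. K * norm (snd q - x0) + norm (T (fst q) x0 - T t0 x0))
      \<longlongrightarrow> K * norm (x0 - x0) + norm (T t0 x0 - T t0 x0)) ?F"
    using snd_lim orbit_lim by (intro tendsto_intros)
  then have majorant_lim: "((\<lambda>q. K * norm (snd q - x0) + norm (T (fst q) x0 - T t0 x0)) \<longlongrightarrow> 0) ?F"
    by simp
  have "\<forall>\<^sub>F q in ?F. fst q < t0 + 1"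
    using order_tendstoD(2)[OF fst_lim] by simp
  moreover have "\<forall>\<^sub>F q in ?F. q \<in> {0..} \<times> UNIV"
    by (simp add: eventually_at_filter)
  ultimately have "\<forall>\<^sub>F q in ?F. norm (T (fst q) (snd q) - T t0 x0)
      \<le> K * norm (snd q - x0) + norm (T (fst q) x0 - T t0 x0)"
  proof eventually_elim
    case (elim q)
    then have "fst q \<in> {0..t0 + 1}"
      by (auto simp: mem_Times_iff)
    interpret bounded_linear "T (fst q)"
      using elim by (auto intro: strongly_continuous_semigroup_bounded_linear[OF sg] simp: mem_Times_iff)
    have "T (fst q) (snd q) - T t0 x0 = T (fst q) (snd q - x0) + (T (fst q) x0 - T t0 x0)"
      by (simp add: diff)
    then have "norm (T (fst q) (snd q) - T t0 x0)
        \<le> norm (T (fst q) (snd q - x0)) + norm (T (fst q) x0 - T t0 x0)"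
      by (metis norm_triangle_ineq)
    then show ?case
      using K[OF \<open>fst q \<in> {0..t0 + 1}\<close>, of "snd q - x0"] by linarith
  qed
  then have "((\<lambda>q. T (fst q) (snd q) - T t0 x0) \<longlongrightarrow> 0) ?F"
    using majorant_lim by (rule Lim_null_comparison)
  then show "((\<lambda>(t, x). T t x) \<longlongrightarrow> (\<lambda>(t, x). T t x) p) ?F"
    using p by (simp add: LIM_zero_iff case_prod_beta')
qed

lemma continuous_on_integral_semigroup:
  fixes T :: "real \<Rightarrow> 'a::{real_normed_vector, second_countable_topology} \<Rightarrow> 'a"
    and g :: "'a \<Rightarrow> real"
  assumes sg: "strongly_continuous_semigroup T"
    and M: "prob_space M" "sets M = sets borel"
    and g: "continuous_on UNIV g" "\<And>x. \<bar>g x\<bar> \<le> B"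
  shows "continuous_on {0..} (\<lambda>s. \<integral>w. g (T s w) \<partial>M)"
proof (rule continuous_on_sequentiallyI)
  interpret M: prob_space M by fact
  have meas: "(\<lambda>w. g (T s w)) \<in> borel_measurable M" if "s \<ge> 0" for s
    using strongly_continuous_semigroup_bounded_linear[OF sg that] g(1) M(2)
    by (intro borel_measurable_continuous_on_sets_borel continuous_on_compose2[OF g(1)] linear_continuous_on) auto
  fix ss :: "nat \<Rightarrow> real" and s
  assume ss: "\<forall>n. ss n \<in> {0..}" "s \<in> {0..}" "ss \<longlonglongrightarrow> s"
  have "(\<lambda>n. g (T (ss n) w)) \<longlonglongrightarrow> g (T s w)" for w
  proof -
    have "(\<lambda>n. T (ss n) w) \<longlonglongrightarrow> T s w"
      by (rule continuous_on_tendsto_compose[OF strongly_continuous_semigroup_orbit[OF sg]]) (use ss in auto)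
    then show ?thesis
      by (rule continuous_on_tendsto_compose[OF g(1)]) auto
  qed
  then show "(\<lambda>n. \<integral>w. g (T (ss n) w) \<partial>M) \<longlonglongrightarrow> (\<integral>w. g (T s w) \<partial>M)"
    using ss g(2) by (intro M.bounded_convergence meas) auto
qed

lemma bounded_lipschitz_modulus:
  fixes g :: "'a::real_normed_vector \<Rightarrow> real"
  assumes "\<And>x. \<bar>g x\<bar> \<le> B" and "L-lipschitz_on UNIV g"
  shows "\<bar>g (x + y) - g x\<bar> \<le> min (2 * B) (L * norm y)"
proof -
  have "\<bar>g (x + y) - g x\<bar> \<le> L * norm y"
    using lipschitz_onD[OF assms(2), of "x + y" x] by (simp add: dist_real_def dist_norm)
  moreover have "\<bar>g (x + y) - g x\<bar> \<le> 2 * B"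
    using assms(1)[of "x + y"] assms(1)[of x] by linarith
  ultimately show ?thesis
    by simp
qed

locale skew_convolution_semigroup =
  fixes T :: "real \<Rightarrow> 'a::{real_normed_vector, complete_space, second_countable_topology} \<Rightarrow> 'a"
    and \<mu> :: "real \<Rightarrow> 'a measure"
  assumes sg: "strongly_continuous_semigroup T"
    and prob: "\<And>t. t \<ge> 0 \<Longrightarrow> prob_space (\<mu> t)"
    and sets_\<mu>: "\<And>t. t \<ge> 0 \<Longrightarrow> sets (\<mu> t) = sets borel"
    and \<mu>0: "\<mu> 0 = return borel 0"
    and lim0: "weak_conv_at_0 \<mu> (\<mu> 0)"
    and conv: "\<And>s t. s \<ge> 0 \<Longrightarrow> t \<ge> 0 \<Longrightarrow> \<mu> (t + s) = meas_conv (distr (\<mu> t) borel (T s)) (\<mu> s)"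
begin

lemma integral_tendsto_at_right_0:
  fixes g :: "'a \<Rightarrow> real"
  assumes "continuous_on UNIV g" and "\<And>x. \<bar>g x\<bar> \<le> B"
  shows "((\<lambda>t. \<integral>y. g y \<partial>\<mu> t) \<longlongrightarrow> g 0) (at_right 0)"
proof -
  have "bounded (range g)"
    using assms(2) by (auto simp: bounded_iff)
  then have "((\<lambda>t. \<integral>y. g y \<partial>\<mu> t) \<longlongrightarrow> (\<integral>y. g y \<partial>\<mu> 0)) (at_right 0)"
    using lim0 assms(1) by (simp add: weak_conv_at_0_def)
  moreover have "(\<integral>y. g y \<partial>\<mu> 0) = g 0"
    unfolding \<mu>0 using assms(1) by (intro integral_return borel_measurable_continuous_onI) auto
  ultimately show ?thesis
    by simp
qed

lemma integral_small_near_0: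
  fixes \<omega> :: "'a \<Rightarrow> real" and e :: real
  assumes "continuous_on UNIV \<omega>" and "\<And>x. \<bar>\<omega> x\<bar> \<le> B" and "\<omega> 0 = 0" and "e > 0"
  obtains b where "b > 0" and "\<And>r. 0 \<le> r \<Longrightarrow> r < b \<Longrightarrow> (\<integral>y. \<omega> y \<partial>\<mu> r) < e"
proof -
  have "\<forall>\<^sub>F r in at_right 0. dist (\<integral>y. \<omega> y \<partial>\<mu> r) (\<omega> 0) < e"
    using integral_tendsto_at_right_0[OF assms(1,2)] \<open>e > 0\<close> by (rule tendstoD)
  then obtain b where "b > 0" and b: "\<forall>r>0. r < b \<longrightarrow> \<bar>(\<integral>y. \<omega> y \<partial>\<mu> r)\<bar> < e"
    using assms(3) by (auto simp: eventually_at_right_field dist_real_def)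
  have "(\<integral>y. \<omega> y \<partial>\<mu> 0) = 0"
    unfolding \<mu>0 using assms(1,3) by (subst integral_return) (auto intro: borel_measurable_continuous_onI)
  show ?thesis
  proof (rule that[OF \<open>b > 0\<close>])
    fix r :: real
    assume "0 \<le> r" "r < b"
    then show "(\<integral>y. \<omega> y \<partial>\<mu> r) < e"
      using b \<open>(\<integral>y. \<omega> y \<partial>\<mu> 0) = 0\<close> \<open>e > 0\<close> by (cases "r = 0") (auto simp: abs_less_iff)
  qed
qed

lemma abs_integral_diff_integral_shift_le:
  fixes g \<omega> :: "'a \<Rightarrow> real"
  assumes "0 \<le> a" and "a \<le> s"
    and g: "g \<in> borel_measurable borel" "\<And>x. \<bar>g x\<bar> \<le> B"
    and \<omega>: "\<omega> \<in> borel_measurable borel" "\<And>y. \<bar>\<omega> y\<bar> \<le> C"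
    and modulus: "\<And>x y. \<bar>g (x + y) - g x\<bar> \<le> \<omega> y"
  shows "\<bar>(\<integral>y. g y \<partial>\<mu> s) - (\<integral>w. g (T (s - a) w) \<partial>\<mu> a)\<bar> \<le> (\<integral>y. \<omega> y \<partial>\<mu> (s - a))"
proof -
  have T_meas: "T (s - a) \<in> borel_measurable (\<mu> a)"
    using assms(1,2) sets_\<mu>[OF assms(1)]
    by (intro borel_measurable_continuous_on_sets_borel linear_continuous_on
        strongly_continuous_semigroup_bounded_linear[OF sg]) auto
  have "\<mu> s = meas_conv (distr (\<mu> a) borel (T (s - a))) (\<mu> (s - a))"
    using conv[of "s - a" a] assms(1,2) by simp
  moreover have "(\<integral>y. g y \<partial>distr (\<mu> a) borel (T (s - a))) = (\<integral>w. g (T (s - a) w) \<partial>\<mu> a)"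
    using T_meas g(1) by (rule integral_distr)
  moreover have "\<bar>(\<integral>y. g y \<partial>meas_conv (distr (\<mu> a) borel (T (s - a))) (\<mu> (s - a)))
      - (\<integral>y. g y \<partial>distr (\<mu> a) borel (T (s - a)))\<bar> \<le> (\<integral>y. \<omega> y \<partial>\<mu> (s - a))"
    using assms(1,2) T_meas g \<omega> modulus
    by (intro abs_integral_meas_conv_diff_le prob_space.prob_space_distr prob sets_\<mu>) auto
  ultimately show ?thesis
    by simp
qed

end

context skew_convolution_semigroup
begin

lemma continuous_on_integral:
  assumes "g \<in> Lip_b"
  shows "continuous_on {0..} (\<lambda>t. \<integral>y. g y \<partial>\<mu> t)"
  unfolding continuous_on_iff
proof (intro ballI allI impI)
  fix t0 e :: real
  assume "t0 \<in> {0..}" and "e > 0"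
  obtain B L where g_bound: "\<And>x. \<bar>g x\<bar> \<le> B" and g_lip: "L-lipschitz_on UNIV g"
    using Lip_bE[OF assms] by blast
  have g_cont: "continuous_on UNIV g"
    using g_lip by (rule lipschitz_on_continuous_on)
  have "0 \<le> B" "0 \<le> L"
    using g_bound[of 0] lipschitz_on_nonneg[OF g_lip] by auto
  define \<omega> where "\<omega> y = min (2 * B) (L * norm y)" for y :: 'a
  have \<omega>_cont: "continuous_on UNIV \<omega>"
    unfolding \<omega>_def by (intro continuous_intros)
  have \<omega>_bound: "\<bar>\<omega> y\<bar> \<le> 2 * B" for y
    using \<open>0 \<le> B\<close> \<open>0 \<le> L\<close> by (simp add: \<omega>_def)
  obtain b where "b > 0" and small: "\<And>r. 0 \<le> r \<Longrightarrow> r < b \<Longrightarrow> (\<integral>y. \<omega> y \<partial>\<mu> r) < e / 3"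
    using integral_small_near_0[OF \<omega>_cont \<omega>_bound, of "e / 3"] \<open>e > 0\<close> \<open>0 \<le> B\<close>
    by (auto simp: \<omega>_def)
  \<comment> \<open>keeps \<open>s - a \<in> [0, b)\<close>, where \<open>small\<close> applies, for all \<open>s \<ge> 0\<close> with \<open>\<bar>s - t0\<bar> < b / 2\<close>\<close>
  define a where "a = max 0 (t0 - b / 2)"
  define H where "H s = (\<integral>w. g (T (s - a) w) \<partial>\<mu> a)" for s
  have "0 \<le> a" "a \<le> t0"
    using \<open>t0 \<in> {0..}\<close> \<open>b > 0\<close> by (auto simp: a_def)
  have "continuous_on {a..} H"
    unfolding H_def
    by (rule continuous_on_compose2[OF continuous_on_integral_semigroup[OF sg prob sets_\<mu> g_cont g_bound]])
      (auto intro!: continuous_intros simp: \<open>0 \<le> a\<close>)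
  moreover have "t0 \<in> {a..}" "e / 3 > 0"
    using \<open>a \<le> t0\<close> \<open>e > 0\<close> by auto
  ultimately obtain d where "d > 0" and H_close: "\<forall>s\<in>{a..}. dist s t0 < d \<longrightarrow> dist (H s) (H t0) < e / 3"
    unfolding continuous_on_iff by blast
  have shift_close: "\<bar>(\<integral>y. g y \<partial>\<mu> s) - H s\<bar> < e / 3" if "a \<le> s" "s < a + b" for s
  proof -
    have "\<bar>(\<integral>y. g y \<partial>\<mu> s) - H s\<bar> \<le> (\<integral>y. \<omega> y \<partial>\<mu> (s - a))"
      unfolding H_def \<omega>_def using \<open>0 \<le> a\<close> that g_cont g_bound \<omega>_cont \<omega>_bound
      by (intro abs_integral_diff_integral_shift_le bounded_lipschitz_modulus[OF g_bound g_lip]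
          borel_measurable_continuous_onI) (auto simp: \<omega>_def)
    also have "\<dots> < e / 3"
      using that by (intro small) auto
    finally show ?thesis .
  qed
  show "\<exists>d>0. \<forall>s\<in>{0..}. dist s t0 < d \<longrightarrow> dist (\<integral>y. g y \<partial>\<mu> s) (\<integral>y. g y \<partial>\<mu> t0) < e"
  proof (intro exI[of _ "min d (b / 2)"] conjI ballI impI)
    fix s :: real
    assume "s \<in> {0..}" and "dist s t0 < min d (b / 2)"
    then have "\<bar>s - t0\<bar> < b / 2" and "dist s t0 < d"
      by (simp_all add: dist_real_def)
    then have "t0 - b / 2 < s" "s < t0 + b / 2"
      by (simp_all only: abs_less_iff) linarith+
    then have "a \<le> s" "s < a + b" "t0 < a + b"
      using \<open>s \<in> {0..}\<close> \<open>b > 0\<close> by (auto simp: a_def max_def)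
    moreover have "\<bar>H s - H t0\<bar> < e / 3"
      using H_close \<open>a \<le> s\<close> \<open>dist s t0 < d\<close> by (simp add: dist_real_def)
    ultimately show "dist (\<integral>y. g y \<partial>\<mu> s) (\<integral>y. g y \<partial>\<mu> t0) < e"
      using shift_close[of s] shift_close[of t0] \<open>a \<le> t0\<close> unfolding dist_real_def by arith
  qed (use \<open>d > 0\<close> \<open>b > 0\<close> in auto)
qed

lemma continuous_on_transition_op:
  assumes "f \<in> Lip_b"
  shows "continuous_on ({0..} \<times> UNIV) (\<lambda>(t, x). transition_op T \<mu> t f x)"
  unfolding continuous_on_def
proof
  fix p :: "real \<times> 'a"
  assume "p \<in> {0..} \<times> UNIV"
  then obtain t0 x0 where p: "p = (t0, x0)" and "t0 \<ge> 0"
    by auto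
  let ?F = "at p within {0..} \<times> UNIV"
  obtain B L where f_bound: "\<And>x. \<bar>f x\<bar> \<le> B" and f_lip: "L-lipschitz_on UNIV f"
    using Lip_bE[OF assms] by blast
  define c where "c = T t0 x0"
  define G where "G t = (\<integral>y. f (c + y) \<partial>\<mu> t)" for t
  have in_domain: "\<forall>\<^sub>F q in ?F. q \<in> {0..} \<times> UNIV"
    by (simp add: eventually_at_filter)
  have "continuous_on {0..} G"
    unfolding G_def by (rule continuous_on_integral[OF Lip_b_translate[OF assms]])
  moreover have "((\<lambda>q. fst q) \<longlongrightarrow> t0) ?F"
    using tendsto_fst[OF tendsto_ident_at[of p]] p by simp
  moreover have "t0 \<in> {0..}"
    using \<open>t0 \<ge> 0\<close> by simp
  moreover have "\<forall>\<^sub>F q in ?F. fst q \<in> {0..}"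
    using in_domain by eventually_elim (auto simp: mem_Times_iff)
  ultimately have G_lim: "((\<lambda>q. G (fst q)) \<longlongrightarrow> G t0) ?F"
    by (rule continuous_on_tendsto_compose)
  have "((\<lambda>(t, x). T t x) \<longlongrightarrow> (\<lambda>(t, x). T t x) p) ?F"
    using strongly_continuous_semigroup_continuous_on[OF sg] \<open>p \<in> {0..} \<times> UNIV\<close>
    unfolding continuous_on_def by blast
  then have "((\<lambda>q. T (fst q) (snd q)) \<longlongrightarrow> c) ?F"
    by (simp add: p c_def case_prod_beta')
  then have "((\<lambda>q. L * norm (T (fst q) (snd q) - c)) \<longlongrightarrow> 0) ?F"
    by (rule tendsto_mult_right_zero[OF tendsto_norm_zero[OF LIM_zero]])
  moreover have "\<forall>\<^sub>F q in ?F. norm (transition_op T \<mu> (fst q) f (snd q) - G (fst q))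
      \<le> L * norm (T (fst q) (snd q) - c)"
    using in_domain
  proof eventually_elim
    case (elim q)
    then have "fst q \<ge> 0"
      by (auto simp: mem_Times_iff)
    then show ?case
      unfolding G_def using transition_op_abs_diff_le[OF prob sets_\<mu> f_bound f_lip] by simp
  qed
  ultimately have "((\<lambda>q. transition_op T \<mu> (fst q) f (snd q) - G (fst q)) \<longlongrightarrow> 0) ?F"
    by (rule Lim_null_comparison[rotated])
  from tendsto_add[OF this G_lim] have "((\<lambda>q. transition_op T \<mu> (fst q) f (snd q)) \<longlongrightarrow> G t0) ?F"
    by simp
  moreover have "G t0 = transition_op T \<mu> t0 f x0"
    by (simp add: G_def c_def transition_op_def)
  ultimately show "((\<lambda>(t, x). transition_op T \<mu> t f x) \<longlongrightarrow> (\<lambda>(t, x). transition_op T \<mu> t f x) p) ?F"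
    using p by (simp add: case_prod_beta')
qed

end

theorem proposition4p1:
  fixes T :: "real \<Rightarrow> 'a::{real_inner, complete_space, second_countable_topology} \<Rightarrow> 'a"
    and \<mu> :: "real \<Rightarrow> 'a measure"
  assumes sg: "strongly_continuous_semigroup T"
    and prob: "\<And>t. t \<ge> 0 \<Longrightarrow> prob_space (\<mu> t)"
    and sets_mu: "\<And>t. t \<ge> 0 \<Longrightarrow> sets (\<mu> t) = sets borel"
    and mu0: "\<mu> 0 = return borel 0"
    and lim0: "weak_conv_at_0 \<mu> (\<mu> 0)"
    and conv: "\<And>s t. s \<ge> 0 \<Longrightarrow> t \<ge> 0 \<Longrightarrow>
                 \<mu> (t + s) = meas_conv (distr (\<mu> t) borel (T s)) (\<mu> s)"
  shows "(\<forall>f\<in>Lip_b. continuous_on ({0..} \<times> UNIV) (\<lambda>(t, x). transition_op T \<mu> t f x))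
       \<and> (\<forall>t>0. transition_op T \<mu> t ` Lip_b \<subseteq> Lip_b)
       \<and> (\<forall>t>0. transition_op T \<mu> t ` C_b \<subseteq> C_b)
       \<and> (\<forall>t>0. transition_op T \<mu> t ` C_b_sigma_w \<subseteq> C_b_sigma_w)
       \<and> (\<forall>t>0. compact_operator (T t) \<longrightarrow> transition_op T \<mu> t ` C_b \<subseteq> C_b_sigma_w)"
proof -
  interpret skew_convolution_semigroup T \<mu>
    using assms by (auto intro!: skew_convolution_semigroup.intro)
  have linear: "bounded_linear (T t)" if "t > 0" for t
    using that by (intro strongly_continuous_semigroup_bounded_linear[OF sg]) simp
  have prob_pos: "prob_space (\<mu> t)" and sets_pos: "sets (\<mu> t) = sets borel" if "t > 0" for t
    using that prob sets_mu by simp_all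
  show ?thesis
  proof (intro conjI ballI allI impI image_subsetI)
    show "continuous_on ({0..} \<times> UNIV) (\<lambda>(t, x). transition_op T \<mu> t f x)" if "f \<in> Lip_b" for f
      using that by (rule continuous_on_transition_op)
    show "transition_op T \<mu> t f \<in> Lip_b" if "t > 0" "f \<in> Lip_b" for t f
      using that by (intro transition_op_Lip_b prob_pos sets_pos linear)
    show "transition_op T \<mu> t f \<in> C_b" if "t > 0" "f \<in> C_b" for t f
      using that by (intro transition_op_C_b prob_pos sets_pos linear_continuous_on linear)
    show "transition_op T \<mu> t f \<in> C_b_sigma_w" if "t > 0" "f \<in> C_b_sigma_w" for t f
      using that by (intro transition_op_C_b_sigma_w prob_pos sets_pos linear)
    show "transition_op T \<mu> t f \<in> C_b_sigma_w" if "t > 0" "compact_operator (T t)" "f \<in> C_b" for t f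
      using that by (intro transition_op_compact_C_b_sigma_w prob_pos sets_pos)
  qed
qed

end
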